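(* Let $\delta\in(0,1)$, $k\ge2$, let $G=S_k$ be the star with hub $h$ and $k$ leaves on vertex set $V$ ($n=k+1$ vertices), and $\mathcal H=\{\{i,j\}:\{i,j\}\in E(S_k)\}$. Suppose that one of the sender $S$, receiver $R$ is the hub and the other is a leaf, and the witness set is $W=V\setminus\{S,R\}$ (the remaining $k-1$ leaves). Then $$b_{\mathrm{eff}}=\delta+f(k,\delta),\qquad f(k,\delta)=\frac{2(k+1)(k-1)}{3k}\,\delta^2,$$ where $f>0$, $\partial f/\partial k>0$ and $\partial^2 f/\partial k^2<0$ (viewing $k$ as a real variable $\ge 1$). Hence the number of equilibrium partitions $N(b_{\mathrm{eff}})$ is non-increasing in $n$, and the marginal increase of $b_{\mathrm{eff}}$ from adding a witness diminishes as $n\to\infty$.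
   Context: For a finite simple undirected graph $G=(V,E)$ and $\delta\in(0,1)$: $v^G(S):=\sum_{i\in S}\sum_{j\in S,\,j\neq i}\delta^{t_{ij}(G[S])}$ for $S\subseteq V$, where $t_{ij}(G[S])$ is the distance in the induced subgraph ($\infty$ if disconnected, $\delta^\infty:=0$). For a conference structure $\mathcal H$ and $C\subseteq V$, $C/\mathcal H$ is the partition of $C$ into classes connected via chains of pairwise-intersecting members of $\mathcal H$ contained in $C$; $r^{v^G}_{\mathcal H}(C):=\sum_{B\in C/\mathcal H}v^G(B)$; for $X\subseteq V$, $\mathcal H|_X:=\{H\in\mathcal H:H\subseteq X\}$. $\mu_j(X;u)$ denotes the Shapley value of player $j$ in the TU game $u$ on player set $X$. Bargaining-power components: $b^j_i:=\mu_j(V;r^{v^G}_{\mathcal H})-\mu_j(V\setminus\{i\};r^{v^G}_{\mathcal H|_{V\setminus\{i\}}})$. Effective bias with sender $S$, receiver $R$, witness set $W$: $b_{\mathrm{eff}}:=\bigl(b^S_R+\sum_{w\in W}(b^S_w+b^w_R)\bigr)/(|W|+1)$. For $b>0$, $N(b)$ denotes the unique integer $N\ge1$ with $\beta(N)\le b<\beta(N-1)$, where $\beta(N)=\frac1{2N(N+1)}$ and $\beta(0)=+\infty$; $N$ is non-increasing in $b$. *)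

theory Defs
  imports "HOL-Analysis.Analysis" "HOL-Library.Extended_Real"
begin

text \<open>Graphs: a symmetric irreflexive adjacency relation E on vertex type 'a.
 walk_in E S i j n: there is a walk of length n from i to j using only vertices of S
 (i.e. a walk in the induced subgraph G[S]).\<close>
definition walk_in :: "('a \<Rightarrow> 'a \<Rightarrow> bool) \<Rightarrow> 'a set \<Rightarrow> 'a \<Rightarrow> 'a \<Rightarrow> nat \<Rightarrow> bool" where
  "walk_in E S i j n \<longleftrightarrow> (\<exists>xs. length xs = Suc n \<and> xs ! 0 = i \<and> xs ! n = j \<and> set xs \<subseteq> S
      \<and> (\<forall>t<n. E (xs ! t) (xs ! Suc t)))"

text \<open>delta ^ t_ij(G[S]), with delta ^ infinity = 0 when i, j are disconnected in G[S].\<close>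
definition decay :: "real \<Rightarrow> ('a \<Rightarrow> 'a \<Rightarrow> bool) \<Rightarrow> 'a set \<Rightarrow> 'a \<Rightarrow> 'a \<Rightarrow> real" where
  "decay \<delta> E S i j = (if \<exists>n. walk_in E S i j n then \<delta> ^ (LEAST n. walk_in E S i j n) else 0)"

definition vG :: "real \<Rightarrow> ('a \<Rightarrow> 'a \<Rightarrow> bool) \<Rightarrow> 'a set \<Rightarrow> real" where
  "vG \<delta> E S = (\<Sum>i\<in>S. \<Sum>j\<in>S - {i}. decay \<delta> E S i j)"

definition conf_rel :: "'a set set \<Rightarrow> 'a set \<Rightarrow> ('a \<times> 'a) set" where
  "conf_rel \<H> C = {(i, j). \<exists>H\<in>\<H>. H \<subseteq> C \<and> i \<in> H \<and> j \<in> H}"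

definition conf_partition :: "'a set set \<Rightarrow> 'a set \<Rightarrow> 'a set set" where
  "conf_partition \<H> C = C // ((conf_rel \<H> C)\<^sup>*)"

definition r_val :: "('a set \<Rightarrow> real) \<Rightarrow> 'a set set \<Rightarrow> 'a set \<Rightarrow> real" where
  "r_val v \<H> C = (\<Sum>B\<in>conf_partition \<H> C. v B)"

definition restrict_conf :: "'a set set \<Rightarrow> 'a set \<Rightarrow> 'a set set" where
  "restrict_conf \<H> X = {H\<in>\<H>. H \<subseteq> X}"

definition shapley :: "'a set \<Rightarrow> ('a set \<Rightarrow> real) \<Rightarrow> 'a \<Rightarrow> real" where
  "shapley X u j = (\<Sum>S\<in>Pow (X - {j}).
      fact (card S) * fact (card X - card S - 1) / fact (card X) * (u (insert j S) - u S))"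

definition bp :: "real \<Rightarrow> ('a \<Rightarrow> 'a \<Rightarrow> bool) \<Rightarrow> 'a set \<Rightarrow> 'a set set \<Rightarrow> 'a \<Rightarrow> 'a \<Rightarrow> real" where
  "bp \<delta> E V \<H> j i = shapley V (r_val (vG \<delta> E) \<H>) j
      - shapley (V - {i}) (r_val (vG \<delta> E) (restrict_conf \<H> (V - {i}))) j"

definition b_eff :: "real \<Rightarrow> ('a \<Rightarrow> 'a \<Rightarrow> bool) \<Rightarrow> 'a set \<Rightarrow> 'a set set \<Rightarrow> 'a \<Rightarrow> 'a \<Rightarrow> 'a set \<Rightarrow> real" where
  "b_eff \<delta> E V \<H> S R W =
     (bp \<delta> E V \<H> S R + (\<Sum>w\<in>W. bp \<delta> E V \<H> S w + bp \<delta> E V \<H> w R)) / (real (card W) + 1)"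

definition beta :: "nat \<Rightarrow> ereal" where
  "beta N = (if N = 0 then \<infinity> else ereal (1 / (2 * real N * (real N + 1))))"

definition N_part :: "real \<Rightarrow> nat" where
  "N_part b = (THE N. N \<ge> 1 \<and> beta N \<le> ereal b \<and> ereal b < beta (N - 1))"

definition star_edge :: "'a \<Rightarrow> 'a set \<Rightarrow> 'a \<Rightarrow> 'a \<Rightarrow> bool" where
  "star_edge h L x y \<longleftrightarrow> (x = h \<and> y \<in> L) \<or> (y = h \<and> x \<in> L)"

definition star_conf :: "'a \<Rightarrow> 'a set \<Rightarrow> 'a set set" where
  "star_conf h L = {{h, l} | l. l \<in> L}"

definition f_star :: "real \<Rightarrow> real \<Rightarrow> real" where
  "f_star k \<delta> = 2 * (k + 1) * (k - 1) / (3 * k) * \<delta>\<^sup>2"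

end

theory Submission
  imports Defs
begin

text \<open>Every conference of the star contains the hub, so a coalition is worth the value
  \<open>2 m \<delta> + m (m - 1) \<delta>\<^sup>2\<close> of its induced star (m leaves) if it contains the hub, and nothing
  otherwise. The hub's marginal contribution then depends only on the coalition size, and a
  leaf contributes \<open>2 \<delta> + 2 t \<delta>\<^sup>2\<close> exactly when the hub and t other leaves are present. This gives
  Shapley values \<open>k \<delta> + k (k - 1) \<delta>\<^sup>2 / 3\<close> for the hub and \<open>\<delta> + 2 (k - 1) \<delta>\<^sup>2 / 3\<close> for a leaf,
  so removing a leaf costs the hub \<open>\<delta> + 2 (k - 1) \<delta>\<^sup>2 / 3\<close> and another leaf \<open>2 \<delta>\<^sup>2 / 3\<close>, while
  removing the hub costs a leaf everything. Averaging over sender-receiver and the \<open>k - 1\<close>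
  witness paths yields \<open>\<delta> + f(k, \<delta>)\<close>; the shape of \<open>f\<close> follows from
  \<open>f(k, \<delta>) = 2 \<delta>\<^sup>2 / 3 \<cdot> (k - 1/k)\<close>, and \<open>N\<close> is antitone because \<open>\<beta>\<close> is.\<close>

section \<open>Distances in a star\<close>

lemma walk_in_0_imp_eq: "walk_in E C i j 0 \<Longrightarrow> i = j"
  unfolding walk_in_def by auto

lemma walk_in_1_imp_edge: "walk_in E C i j 1 \<Longrightarrow> E i j"
  unfolding walk_in_def by force

lemma walk_in_1I: "E i j \<Longrightarrow> i \<in> C \<Longrightarrow> j \<in> C \<Longrightarrow> walk_in E C i j 1"
  unfolding walk_in_def by (intro exI[of _ "[i, j]"]) auto

lemma walk_in_2I: "E i m \<Longrightarrow> E m j \<Longrightarrow> i \<in> C \<Longrightarrow> m \<in> C \<Longrightarrow> j \<in> C \<Longrightarrow> walk_in E C i j 2"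
  unfolding walk_in_def by (intro exI[of _ "[i, m, j]"]) (auto simp: less_Suc_eq numeral_2_eq_2)

lemma decay_edge:
  assumes "i \<noteq> j" "E i j" "i \<in> C" "j \<in> C"
  shows "decay \<delta> E C i j = \<delta>"
proof -
  have walk: "walk_in E C i j 1" using walk_in_1I assms by metis
  have "(LEAST n. walk_in E C i j n) = 1"
  proof (rule Least_equality[where P = "walk_in E C i j", OF walk])
    fix n assume "walk_in E C i j n"
    then show "1 \<le> n" using walk_in_0_imp_eq[of E C i j] assms(1) by (cases n) auto
  qed
  then show ?thesis using walk unfolding decay_def by auto
qed

lemma decay_common_neighbour:
  assumes "i \<noteq> j" "\<not> E i j" "E i m" "E m j" "i \<in> C" "j \<in> C" "m \<in> C"
  shows "decay \<delta> E C i j = \<delta>\<^sup>2"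
proof -
  have walk: "walk_in E C i j 2" using walk_in_2I assms by metis
  have "(LEAST n. walk_in E C i j n) = 2"
  proof (rule Least_equality[where P = "walk_in E C i j", OF walk])
    fix n assume "walk_in E C i j n"
    moreover have "n \<noteq> 0" "n \<noteq> 1"
      using calculation walk_in_0_imp_eq walk_in_1_imp_edge assms(1,2) by metis+
    ultimately show "2 \<le> n" by simp
  qed
  then show ?thesis using walk unfolding decay_def by auto
qed

text \<open>Hub-leaf pairs are at distance 1, leaf-leaf pairs at distance 2.\<close>
definition star_value :: "real \<Rightarrow> nat \<Rightarrow> real" where
  "star_value \<delta> m = 2 * real m * \<delta> + real m * (real m - 1) * \<delta>\<^sup>2"

lemma star_value_Suc_diff: "star_value \<delta> (Suc t) - star_value \<delta> t = 2 * \<delta> + 2 * real t * \<delta>\<^sup>2"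
  by (simp add: star_value_def algebra_simps)

lemma sum_star_value:
  "(\<Sum>s<n. star_value \<delta> s) = real n * (real n - 1) * \<delta> + real n * (real n - 1) * (real n - 2) * \<delta>\<^sup>2 / 3"
  by (induction n) (simp_all add: star_value_def field_simps power2_eq_square)

lemma vG_star:
  assumes "h \<notin> L" "M \<subseteq> L" "finite M"
  shows "vG \<delta> (star_edge h L) (insert h M) = star_value \<delta> (card M)"
proof -
  let ?E = "star_edge h L" and ?C = "insert h M"
  have hM: "h \<notin> M" using assms by auto
  then have leaves: "?C - {h} = M" by auto
  have hub: "(\<Sum>j\<in>M. decay \<delta> ?E ?C h j) = real (card M) * \<delta>"
  proof -
    have "(\<Sum>j\<in>M. decay \<delta> ?E ?C h j) = (\<Sum>j\<in>M. \<delta>)"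
      using hM assms(2) by (intro sum.cong) (auto intro!: decay_edge simp: star_edge_def)
    then show ?thesis by simp
  qed
  have leaf: "(\<Sum>j\<in>?C - {l}. decay \<delta> ?E ?C l j) = \<delta> + (real (card M) - 1) * \<delta>\<^sup>2" if "l \<in> M" for l
  proof -
    have "?C - {l} = insert h (M - {l})" using that hM by auto
    then have "(\<Sum>j\<in>?C - {l}. decay \<delta> ?E ?C l j) = decay \<delta> ?E ?C l h + (\<Sum>j\<in>M - {l}. decay \<delta> ?E ?C l j)"
      using hM assms(3) by simp
    also have "decay \<delta> ?E ?C l h = \<delta>"
      using that hM assms by (intro decay_edge) (auto simp: star_edge_def)
    also have "(\<Sum>j\<in>M - {l}. decay \<delta> ?E ?C l j) = (\<Sum>j\<in>M - {l}. \<delta>\<^sup>2)"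
      using that hM assms by (intro sum.cong refl decay_common_neighbour[where m = h]) (auto simp: star_edge_def)
    also have "\<dots> = (real (card M) - 1) * \<delta>\<^sup>2"
    proof -
      have "card M \<ge> 1" using that assms(3) by (metis One_nat_def Suc_leI card_gt_0_iff empty_iff)
      then show ?thesis using that assms(3) by (simp add: of_nat_diff)
    qed
    finally show ?thesis .
  qed
  have "vG \<delta> ?E ?C = (\<Sum>j\<in>M. decay \<delta> ?E ?C h j) + (\<Sum>l\<in>M. \<Sum>j\<in>?C - {l}. decay \<delta> ?E ?C l j)"
    unfolding vG_def using hM assms(3) leaves by simp
  also have "\<dots> = star_value \<delta> (card M)"
    by (simp add: hub leaf star_value_def algebra_simps power2_eq_square)
  finally show ?thesis .
qed

section \<open>Conference games on a star\<close>

lemma r_val_eq_0_if_hub_absent: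
  assumes "\<forall>H\<in>\<H>. h \<in> H" "h \<notin> C"
  shows "r_val (vG \<delta> E) \<H> C = 0"
proof -
  have "conf_rel \<H> C = {}" using assms unfolding conf_rel_def by auto
  then have "conf_partition \<H> C = (\<lambda>x. {x}) ` C"
    unfolding conf_partition_def quotient_def by auto
  moreover have "vG \<delta> E {x} = 0" for x unfolding vG_def by simp
  ultimately show ?thesis unfolding r_val_def by (intro sum.neutral) auto
qed

lemma conf_partition_eq_singleton_if_hub:
  assumes "h \<in> C" "\<forall>l\<in>C - {h}. {h, l} \<in> \<H>"
  shows "conf_partition \<H> C = {C}"
proof -
  let ?R = "conf_rel \<H> C"
  have edge: "(h, l) \<in> ?R \<and> (l, h) \<in> ?R" if "l \<in> C - {h}" for l
  proof -
    have "{h, l} \<in> \<H>" "{h, l} \<subseteq> C" using assms that by auto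
    then show ?thesis unfolding conf_rel_def by blast
  qed
  have to_hub: "(l, h) \<in> ?R\<^sup>*" and from_hub: "(h, l) \<in> ?R\<^sup>*" if "l \<in> C" for l
    using edge[of l] that by (cases "l = h"; auto)+
  have closed: "y \<in> C" if "(a, y) \<in> ?R\<^sup>*" "a \<in> C" for a y
    using that by (induction rule: rtrancl_induct) (auto simp: conf_rel_def)
  have "?R\<^sup>* `` {a} = C" if "a \<in> C" for a
    using that closed rtrancl_trans[OF to_hub from_hub] by blast
  then show ?thesis
    unfolding conf_partition_def quotient_def using assms(1) by auto
qed

definition star_game :: "real \<Rightarrow> 'a \<Rightarrow> 'a set \<Rightarrow> real" where
  "star_game \<delta> h C = (if h \<in> C then star_value \<delta> (card C - 1) else 0)"

lemma r_val_star_edge_eq_star_game: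
  assumes "finite L" "h \<notin> L" "C \<subseteq> insert h L" "\<forall>H\<in>\<H>. h \<in> H"
    and "h \<in> C \<Longrightarrow> \<forall>l\<in>C - {h}. {h, l} \<in> \<H>"
  shows "r_val (vG \<delta> (star_edge h L)) \<H> C = star_game \<delta> h C"
proof (cases "h \<in> C")
  case True
  have "vG \<delta> (star_edge h L) (insert h (C - {h})) = star_value \<delta> (card (C - {h}))"
    using assms by (intro vG_star) (auto intro: finite_subset)
  then show ?thesis
    using True conf_partition_eq_singleton_if_hub[OF True assms(5)[OF True]]
    by (simp add: r_val_def star_game_def insert_absorb)
next
  case False
  then show ?thesis using r_val_eq_0_if_hub_absent[OF assms(4)] by (simp add: star_game_def)
qed

lemma r_val_restrict_star_conf:
  assumes "finite L" "h \<notin> L" "C \<subseteq> X" "X \<subseteq> insert h L"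
  shows "r_val (vG \<delta> (star_edge h L)) (restrict_conf (star_conf h L) X) C = star_game \<delta> h C"
  using assms by (intro r_val_star_edge_eq_star_game)
    (auto simp: restrict_conf_def star_conf_def)

lemma restrict_star_conf_all: "restrict_conf (star_conf h L) (insert h L) = star_conf h L"
  by (auto simp: restrict_conf_def star_conf_def)

section \<open>Shapley values\<close>

lemma shapley_cong:
  assumes "j \<in> X" "\<And>S. S \<subseteq> X \<Longrightarrow> u S = u' S"
  shows "shapley X u j = shapley X u' j"
  unfolding shapley_def using assms by (intro sum.cong refl) (simp add: subset_iff)

lemma shapley_eq_0:
  assumes "j \<in> X" "\<And>S. S \<subseteq> X \<Longrightarrow> u S = 0"
  shows "shapley X u j = 0"
  unfolding shapley_def using assms by (intro sum.neutral) (simp add: subset_iff)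

lemma sum_Pow_card:
  assumes "finite A"
  shows "(\<Sum>S\<in>Pow A. \<phi> (card S)) = (\<Sum>s\<le>card A. real (card A choose s) * \<phi> s)"
proof -
  have "(\<Sum>S\<in>Pow A. \<phi> (card S)) = (\<Sum>s\<le>card A. \<Sum>S\<in>{S. S \<in> Pow A \<and> card S = s}. \<phi> (card S))"
    using assms by (intro sum.group[symmetric]) (auto intro: card_mono)
  also have "\<dots> = (\<Sum>s\<le>card A. real (card A choose s) * \<phi> s)"
  proof (intro sum.cong refl)
    fix s
    have "(\<Sum>S\<in>{S. S \<in> Pow A \<and> card S = s}. \<phi> (card S)) = (\<Sum>S\<in>{S. S \<subseteq> A \<and> card S = s}. \<phi> s)"
      by (intro sum.cong) auto
    then show "(\<Sum>S\<in>{S. S \<in> Pow A \<and> card S = s}. \<phi> (card S)) = real (card A choose s) * \<phi> s"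
      using n_subsets[OF assms, of s] by simp
  qed
  finally show ?thesis .
qed

lemma sum_Pow_insert:
  assumes "finite A" "a \<notin> A"
  shows "(\<Sum>S\<in>Pow (insert a A). g S) = (\<Sum>S\<in>Pow A. g S) + (\<Sum>S\<in>Pow A. g (insert a S))"
proof -
  have inj: "inj_on (insert a) (Pow A)"
    using assms(2) unfolding inj_on_def by (metis PowD insert_ident subset_iff)
  have "(\<Sum>S\<in>Pow (insert a A). g S) = (\<Sum>S\<in>Pow A. g S) + (\<Sum>S\<in>insert a ` Pow A. g S)"
    unfolding Pow_insert using assms by (intro sum.union_disjoint) auto
  also have "(\<Sum>S\<in>insert a ` Pow A. g S) = (\<Sum>S\<in>Pow A. g (insert a S))"
    using sum.reindex[OF inj, of g] by (simp add: o_def)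
  finally show ?thesis .
qed

text \<open>If the marginal contribution of \<open>j\<close> to \<open>S\<close> depends only on \<open>|S|\<close>, the Shapley weights
  of all coalitions of a given size add up to \<open>1 / |X|\<close>.\<close>
lemma shapley_card_marginal:
  fixes \<Delta> :: "nat \<Rightarrow> real"
  assumes "finite X" "j \<in> X" and marginal: "\<And>S. S \<subseteq> X - {j} \<Longrightarrow> u (insert j S) - u S = \<Delta> (card S)"
  shows "shapley X u j = (\<Sum>s<card X. \<Delta> s) / card X"
proof -
  obtain M where cX: "card X = Suc M"
    using assms(1,2) by (metis card_gt_0_iff empty_iff gr0_implies_Suc)
  have cA: "card (X - {j}) = M" using assms cX by simp
  have "shapley X u j = (\<Sum>S\<in>Pow (X - {j}). fact (card S) * fact (M - card S) / fact (Suc M) * \<Delta> (card S))"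
    unfolding shapley_def cX by (intro sum.cong refl) (simp add: marginal)
  also have "\<dots> = (\<Sum>s\<le>M. real (M choose s) * (fact s * fact (M - s) / fact (Suc M) * \<Delta> s))"
    using sum_Pow_card[of "X - {j}" "\<lambda>s. fact s * fact (M - s) / fact (Suc M) * \<Delta> s"] assms(1) cA
    by (simp only: finite_Diff)
  also have "\<dots> = (\<Sum>s\<le>M. \<Delta> s / Suc M)"
  proof (intro sum.cong refl)
    fix s assume "s \<in> {..M}"
    then have binom: "real (M choose s) * (fact s * fact (M - s)) = fact M"
      by (simp add: binomial_fact)
    have "real (M choose s) * (fact s * fact (M - s) / fact (Suc M) * \<Delta> s)
        = real (M choose s) * (fact s * fact (M - s)) * \<Delta> s / fact (Suc M)"
      by (simp add: ac_simps)
    also have "\<dots> = \<Delta> s / Suc M"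
      unfolding binom by simp
    finally show "real (M choose s) * (fact s * fact (M - s) / fact (Suc M) * \<Delta> s) = \<Delta> s / Suc M" .
  qed
  finally show ?thesis
    unfolding cX by (simp add: sum_divide_distrib lessThan_Suc_atMost)
qed

lemma shapley_veto_marginal:
  fixes d :: "nat \<Rightarrow> real"
  assumes "finite A" "h \<notin> A" "j \<notin> A" "h \<noteq> j"
    and marginal: "\<And>S. S \<subseteq> insert h A \<Longrightarrow> u (insert j S) - u S = (if h \<in> S then d (card S - 1) else 0)"
  shows "shapley (insert h (insert j A)) u j
           = (\<Sum>t\<le>card A. (real t + 1) * d t) / ((real (card A) + 1) * (real (card A) + 2))"
proof -
  define M where "M = card A"
  let ?X = "insert h (insert j A)"
  let ?w = "\<lambda>s. fact s * fact (M + 1 - s) / fact (M + 2) :: real"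
  have cX: "card ?X = M + 2" and XA: "?X - {j} = insert h A"
    using assms M_def by auto
  let ?g = "\<lambda>S. ?w (card S) * (if h \<in> S then d (card S - 1) else 0)"
  have "shapley ?X u j = (\<Sum>S\<in>Pow (insert h A). ?g S)"
    unfolding shapley_def cX XA by (intro sum.cong refl) (simp add: marginal)
  also have "\<dots> = (\<Sum>T\<in>Pow A. ?g T) + (\<Sum>T\<in>Pow A. ?g (insert h T))"
    by (rule sum_Pow_insert[OF assms(1,2)])
  also have "(\<Sum>T\<in>Pow A. ?g T) = 0"
    using assms(2) by (intro sum.neutral) auto
  also have "(\<Sum>T\<in>Pow A. ?g (insert h T)) = (\<Sum>T\<in>Pow A. ?w (card T + 1) * d (card T))"
  proof (intro sum.cong refl)
    fix T assume "T \<in> Pow A"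
    then have "finite T" "h \<notin> T" using assms(1,2) by (auto intro: finite_subset)
    then show "?g (insert h T) = ?w (card T + 1) * d (card T)" by simp
  qed
  also have "\<dots> = (\<Sum>t\<le>M. real (M choose t) * (?w (t + 1) * d t))"
    using sum_Pow_card[OF assms(1), of "\<lambda>t. ?w (t + 1) * d t"] unfolding M_def by simp
  also have "\<dots> = (\<Sum>t\<le>M. (real t + 1) * d t / ((real M + 1) * (real M + 2)))"
  proof (intro sum.cong refl)
    fix t assume "t \<in> {..M}"
    then have binom: "real (M choose t) * (fact t * fact (M - t)) = fact M"
      by (simp add: binomial_fact)
    have fact_M2: "fact (M + 2) = (real M + 2) * (real M + 1) * (fact M :: real)"
      by (simp add: numeral_2_eq_2 algebra_simps)
    have "real (M choose t) * (?w (t + 1) * d t)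
        = real (M choose t) * (fact t * fact (M - t)) * ((real t + 1) * d t) / fact (M + 2)"
      by (simp add: ac_simps)
    also have "\<dots> = (real t + 1) * d t / ((real M + 1) * (real M + 2))"
      unfolding binom fact_M2 by (simp add: ac_simps)
    finally show "real (M choose t) * (?w (t + 1) * d t) = (real t + 1) * d t / ((real M + 1) * (real M + 2))" .
  qed
  finally show ?thesis unfolding M_def by (simp add: sum_divide_distrib)
qed

lemma star_game_insert_hub:
  assumes "finite S" "h \<notin> S"
  shows "star_game \<delta> h (insert h S) - star_game \<delta> h S = star_value \<delta> (card S)"
  using assms by (simp add: star_game_def)

lemma star_game_insert_other:
  assumes "finite S" "j \<notin> S" "j \<noteq> h"
  shows "star_game \<delta> h (insert j S) - star_game \<delta> h S
           = (if h \<in> S then 2 * \<delta> + 2 * real (card S - 1) * \<delta>\<^sup>2 else 0)"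
proof (cases "h \<in> S")
  case True
  then obtain t where "card S = Suc t" using assms(1) by (metis card_gt_0_iff empty_iff gr0_implies_Suc)
  then show ?thesis using True assms star_value_Suc_diff[of \<delta> t] by (simp add: star_game_def)
qed (use assms in \<open>simp add: star_game_def\<close>)

lemma shapley_star_game_hub:
  assumes "finite X" "h \<in> X"
  shows "shapley X (star_game \<delta> h) h
           = (real (card X) - 1) * \<delta> + (real (card X) - 1) * (real (card X) - 2) * \<delta>\<^sup>2 / 3"
proof -
  have "shapley X (star_game \<delta> h) h = (\<Sum>s<card X. star_value \<delta> s) / card X"
    using assms by (intro shapley_card_marginal) (auto intro: finite_subset star_game_insert_hub)
  also have "(\<Sum>s<card X. star_value \<delta> s)
      = real (card X) * ((real (card X) - 1) * \<delta> + (real (card X) - 1) * (real (card X) - 2) * \<delta>\<^sup>2 / 3)"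
    by (simp add: sum_star_value algebra_simps)
  moreover have "card X \<noteq> 0" using assms by auto
  ultimately show ?thesis by simp
qed

lemma sum_leaf_marginals:
  "(\<Sum>t\<le>n. (real t + 1) * (2 * \<delta> + 2 * real t * \<delta>\<^sup>2)) = (real n + 1) * (real n + 2) * (\<delta> + 2 * real n * \<delta>\<^sup>2 / 3)"
proof (induction n)
  case (Suc n)
  then show ?case by (simp add: field_simps power2_eq_square)
qed simp

lemma shapley_star_game_other:
  assumes "finite X" "h \<in> X" "j \<in> X" "j \<noteq> h"
  shows "shapley X (star_game \<delta> h) j = \<delta> + 2 * \<delta>\<^sup>2 * (real (card X) - 2) / 3"
proof -
  define A where "A = X - {h, j}"
  have X: "X = insert h (insert j A)" using assms by (auto simp: A_def)
  have "finite A" "h \<notin> A" "j \<notin> A" using assms(1) by (auto simp: A_def)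
  then have cA: "real (card X) = real (card A) + 2" unfolding X using assms(4) by simp
  have "shapley X (star_game \<delta> h) j
          = (\<Sum>t\<le>card A. (real t + 1) * (2 * \<delta> + 2 * real t * \<delta>\<^sup>2)) / ((real (card A) + 1) * (real (card A) + 2))"
    unfolding X
  proof (rule shapley_veto_marginal)
    fix S assume "S \<subseteq> insert h A"
    then have "finite S" "j \<notin> S" using \<open>finite A\<close> \<open>j \<notin> A\<close> assms(4) by (auto intro: finite_subset)
    then show "star_game \<delta> h (insert j S) - star_game \<delta> h S
        = (if h \<in> S then 2 * \<delta> + 2 * real (card S - 1) * \<delta>\<^sup>2 else 0)"
      using assms(4) by (rule star_game_insert_other)
  qed (use \<open>finite A\<close> \<open>h \<notin> A\<close> \<open>j \<notin> A\<close> assms(4) in auto)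
  also have "(\<Sum>t\<le>card A. (real t + 1) * (2 * \<delta> + 2 * real t * \<delta>\<^sup>2))
               = (real (card A) + 1) * (real (card A) + 2) * (\<delta> + 2 * real (card A) * \<delta>\<^sup>2 / 3)"
    by (rule sum_leaf_marginals)
  finally show ?thesis
    unfolding cA by (simp add: add_pos_pos)
qed

section \<open>Bargaining power in a star\<close>

lemma shapley_restrict_star_conf:
  assumes "finite L" "h \<notin> L" "X \<subseteq> insert h L" "j \<in> X"
  shows "shapley X (r_val (vG \<delta> (star_edge h L)) (restrict_conf (star_conf h L) X)) j
           = shapley X (star_game \<delta> h) j"
  using assms(4) r_val_restrict_star_conf[OF assms(1,2) _ assms(3)] by (rule shapley_cong)

lemma bp_star_conf:
  assumes "finite L" "h \<notin> L" "j \<in> insert h L" "j \<noteq> i"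
  shows "bp \<delta> (star_edge h L) (insert h L) (star_conf h L) j i
           = shapley (insert h L) (star_game \<delta> h) j - shapley (insert h L - {i}) (star_game \<delta> h) j"
proof -
  have "shapley (insert h L) (r_val (vG \<delta> (star_edge h L)) (star_conf h L)) j
      = shapley (insert h L) (star_game \<delta> h) j"
    using shapley_restrict_star_conf[OF assms(1,2) order_refl assms(3)] unfolding restrict_star_conf_all .
  moreover have "shapley (insert h L - {i}) (r_val (vG \<delta> (star_edge h L)) (restrict_conf (star_conf h L) (insert h L - {i}))) j
      = shapley (insert h L - {i}) (star_game \<delta> h) j"
    using assms by (intro shapley_restrict_star_conf) auto
  ultimately show ?thesis unfolding bp_def by simp
qed

lemma bp_star_hub_leaf:
  assumes "finite L" "h \<notin> L" "i \<in> L"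
  shows "bp \<delta> (star_edge h L) (insert h L) (star_conf h L) h i = \<delta> + 2 * (real (card L) - 1) * \<delta>\<^sup>2 / 3"
proof -
  have "h \<noteq> i" "h \<in> insert h L - {i}" "card (insert h L) = card L + 1" "card (insert h L - {i}) = card L"
    using assms by auto
  have "bp \<delta> (star_edge h L) (insert h L) (star_conf h L) h i
      = shapley (insert h L) (star_game \<delta> h) h - shapley (insert h L - {i}) (star_game \<delta> h) h"
    using bp_star_conf[OF assms(1,2), of h i] \<open>h \<noteq> i\<close> by simp
  also have "shapley (insert h L) (star_game \<delta> h) h
      = real (card L) * \<delta> + real (card L) * (real (card L) - 1) * \<delta>\<^sup>2 / 3"
    using shapley_star_game_hub[of "insert h L" h \<delta>] assms(1) \<open>card (insert h L) = card L + 1\<close> by simp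
  also have "shapley (insert h L - {i}) (star_game \<delta> h) h
      = (real (card L) - 1) * \<delta> + (real (card L) - 1) * (real (card L) - 2) * \<delta>\<^sup>2 / 3"
    using shapley_star_game_hub[of "insert h L - {i}" h \<delta>] assms(1) \<open>h \<in> insert h L - {i}\<close>
      \<open>card (insert h L - {i}) = card L\<close> by simp
  finally show ?thesis by (simp add: field_simps)
qed

lemma bp_star_leaf_leaf:
  assumes "finite L" "h \<notin> L" "i \<in> L" "j \<in> L" "i \<noteq> j"
  shows "bp \<delta> (star_edge h L) (insert h L) (star_conf h L) j i = 2 * \<delta>\<^sup>2 / 3"
proof -
  have "j \<noteq> h" "h \<in> insert h L - {i}" "j \<in> insert h L - {i}"
    "card (insert h L) = card L + 1" "card (insert h L - {i}) = card L"
    using assms by auto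
  have "bp \<delta> (star_edge h L) (insert h L) (star_conf h L) j i
      = shapley (insert h L) (star_game \<delta> h) j - shapley (insert h L - {i}) (star_game \<delta> h) j"
    using bp_star_conf[OF assms(1,2), of j i] assms(4,5) by simp
  also have "shapley (insert h L) (star_game \<delta> h) j = \<delta> + 2 * \<delta>\<^sup>2 * (real (card L) - 1) / 3"
    using shapley_star_game_other[of "insert h L" h j \<delta>] assms(1,4) \<open>j \<noteq> h\<close>
      \<open>card (insert h L) = card L + 1\<close> by simp
  also have "shapley (insert h L - {i}) (star_game \<delta> h) j = \<delta> + 2 * \<delta>\<^sup>2 * (real (card L) - 2) / 3"
    using shapley_star_game_other[of "insert h L - {i}" h j \<delta>] assms(1) \<open>j \<noteq> h\<close>
      \<open>h \<in> insert h L - {i}\<close> \<open>j \<in> insert h L - {i}\<close> \<open>card (insert h L - {i}) = card L\<close> by simp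
  finally show ?thesis by (simp add: field_simps)
qed

lemma bp_star_leaf_hub:
  assumes "finite L" "h \<notin> L" "j \<in> L"
  shows "bp \<delta> (star_edge h L) (insert h L) (star_conf h L) j h = \<delta> + 2 * (real (card L) - 1) * \<delta>\<^sup>2 / 3"
proof -
  have "j \<noteq> h" "insert h L - {h} = L" "card (insert h L) = card L + 1"
    using assms by auto
  have "bp \<delta> (star_edge h L) (insert h L) (star_conf h L) j h
      = shapley (insert h L) (star_game \<delta> h) j - shapley L (star_game \<delta> h) j"
    using bp_star_conf[OF assms(1,2), of j h] assms(3) \<open>j \<noteq> h\<close> \<open>insert h L - {h} = L\<close> by simp
  also have "shapley (insert h L) (star_game \<delta> h) j = \<delta> + 2 * \<delta>\<^sup>2 * (real (card L) - 1) / 3"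
    using shapley_star_game_other[of "insert h L" h j \<delta>] assms(1,3) \<open>j \<noteq> h\<close>
      \<open>card (insert h L) = card L + 1\<close> by simp
  also have "shapley L (star_game \<delta> h) j = 0"
    using assms by (intro shapley_eq_0) (auto simp: star_game_def)
  finally show ?thesis by simp
qed

lemma bp_star_witness:
  assumes "finite L" "h \<notin> L" "(S = h \<and> R \<in> L) \<or> (R = h \<and> S \<in> L)" "w \<in> insert h L - {S, R}"
  shows "bp \<delta> (star_edge h L) (insert h L) (star_conf h L) S w + bp \<delta> (star_edge h L) (insert h L) (star_conf h L) w R
           = \<delta> + 2 * (real (card L) - 1) * \<delta>\<^sup>2 / 3 + 2 * \<delta>\<^sup>2 / 3"
  using assms(3)
proof
  assume "S = h \<and> R \<in> L"
  moreover have "w \<in> L" "w \<noteq> R" using assms(4) calculation by auto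
  ultimately show ?thesis using bp_star_hub_leaf[OF assms(1,2)] bp_star_leaf_leaf[OF assms(1,2)] by simp
next
  assume "R = h \<and> S \<in> L"
  moreover have "w \<in> L" "w \<noteq> S" using assms(4) calculation by auto
  ultimately show ?thesis using bp_star_leaf_hub[OF assms(1,2)] bp_star_leaf_leaf[OF assms(1,2)] by simp
qed

lemma b_eff_star:
  assumes "finite L" "h \<notin> L" "(S = h \<and> R \<in> L) \<or> (R = h \<and> S \<in> L)"
  shows "b_eff \<delta> (star_edge h L) (insert h L) (star_conf h L) S R (insert h L - {S, R})
           = \<delta> + f_star (real (card L)) \<delta>"
proof -
  define A where "A = \<delta> + 2 * (real (card L) - 1) * \<delta>\<^sup>2 / 3"
  let ?bp = "bp \<delta> (star_edge h L) (insert h L) (star_conf h L)"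
  obtain l where l: "l \<in> L" "{S, R} = {h, l}" using assms(3) by auto
  then have W: "insert h L - {S, R} = L - {l}" using assms(2) by auto
  have "1 \<le> card L" using l(1) assms(1) by (metis One_nat_def Suc_leI card_gt_0_iff empty_iff)
  then have card_W: "real (card (insert h L - {S, R})) = real (card L) - 1"
    unfolding W using l(1) assms(1) by (simp add: of_nat_diff)
  have sender_receiver: "?bp S R = A"
    using assms(3) bp_star_hub_leaf[OF assms(1,2)] bp_star_leaf_hub[OF assms(1,2)] unfolding A_def by auto
  have witness: "?bp S w + ?bp w R = A + 2 * \<delta>\<^sup>2 / 3" if "w \<in> insert h L - {S, R}" for w
    using bp_star_witness[OF assms that] unfolding A_def .
  have "b_eff \<delta> (star_edge h L) (insert h L) (star_conf h L) S R (insert h L - {S, R})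
          = (A + (real (card L) - 1) * (A + 2 * \<delta>\<^sup>2 / 3)) / real (card L)"
    unfolding b_eff_def sender_receiver using witness card_W by simp
  also have "\<dots> = \<delta> + f_star (real (card L)) \<delta>"
    using \<open>1 \<le> card L\<close> unfolding A_def f_star_def by (simp add: field_simps power2_eq_square)
  finally show ?thesis .
qed

section \<open>Shape of \<open>f\<close> and the number of equilibrium partitions\<close>

lemma f_star_eq: "f_star y \<delta> = 2 * \<delta>\<^sup>2 / 3 * (y - inverse y)"
  by (cases "y = 0") (simp_all add: f_star_def field_simps power2_eq_square)

lemma f_star_pos:
  assumes "0 < \<delta>" "1 < y"
  shows "0 < f_star y \<delta>"
  using assms unfolding f_star_def by (simp add: divide_pos_pos)

lemma f_star_mono:
  assumes "0 < y1" "y1 \<le> y2"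
  shows "f_star y1 \<delta> \<le> f_star y2 \<delta>"
proof -
  have "inverse y2 \<le> inverse y1" using assms by (simp add: le_imp_inverse_le)
  then have "y1 - inverse y1 \<le> y2 - inverse y2" using assms by linarith
  then show ?thesis unfolding f_star_eq by (intro mult_left_mono) auto
qed

lemma f_star_has_derivative:
  assumes "x \<noteq> 0"
  shows "((\<lambda>y. f_star y \<delta>) has_real_derivative 2 * \<delta>\<^sup>2 / 3 * (1 + inverse (x\<^sup>2))) (at x)"
  unfolding f_star_eq using assms
  by (auto intro!: derivative_eq_intros simp: field_simps power2_eq_square)

lemma deriv_f_star: "x \<noteq> 0 \<Longrightarrow> deriv (\<lambda>y. f_star y \<delta>) x = 2 * \<delta>\<^sup>2 / 3 * (1 + inverse (x\<^sup>2))"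
  using f_star_has_derivative DERIV_imp_deriv by blast

lemma deriv_f_star_has_derivative:
  assumes "0 < x"
  shows "(deriv (\<lambda>y. f_star y \<delta>) has_real_derivative - 4 * \<delta>\<^sup>2 / 3 / x ^ 3) (at x)"
proof (rule has_field_derivative_transform_within_open[where S = "{0<..}"])
  show "((\<lambda>y. 2 * \<delta>\<^sup>2 / 3 * (1 + inverse (y\<^sup>2))) has_real_derivative - 4 * \<delta>\<^sup>2 / 3 / x ^ 3) (at x)"
    using assms by (auto intro!: derivative_eq_intros simp: field_simps power2_eq_square power3_eq_cube)
  show "\<And>y. y \<in> {0<..} \<Longrightarrow> 2 * \<delta>\<^sup>2 / 3 * (1 + inverse (y\<^sup>2)) = deriv (\<lambda>y. f_star y \<delta>) y"
    using deriv_f_star by force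
qed (use assms in auto)

lemma f_star_increasing_concave:
  assumes "0 < \<delta>" "1 \<le> x"
  shows "(\<lambda>y. f_star y \<delta>) differentiable (at x) \<and> deriv (\<lambda>y. f_star y \<delta>) x > 0
    \<and> deriv (\<lambda>y. f_star y \<delta>) differentiable (at x) \<and> deriv (deriv (\<lambda>y. f_star y \<delta>)) x < 0"
proof -
  have "x \<noteq> 0" "0 < x" using assms by auto
  have "deriv (\<lambda>y. f_star y \<delta>) x > 0"
    unfolding deriv_f_star[OF \<open>x \<noteq> 0\<close>] using assms by (simp add: add_pos_nonneg)
  moreover have "deriv (deriv (\<lambda>y. f_star y \<delta>)) x < 0"
    using DERIV_imp_deriv[OF deriv_f_star_has_derivative[OF \<open>0 < x\<close>]] assms
    by (simp add: divide_neg_pos)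
  ultimately show ?thesis
    using f_star_has_derivative[OF \<open>x \<noteq> 0\<close>] deriv_f_star_has_derivative[OF \<open>0 < x\<close>]
    by (auto simp: real_differentiable_def)
qed

lemma f_star_increments_decrease:
  assumes "0 < \<delta>" "0 < m"
  shows "f_star (m + 2) \<delta> - f_star (m + 1) \<delta> < f_star (m + 1) \<delta> - f_star m \<delta>"
proof -
  have "1 / (m + 1) - 1 / (m + 2) = 1 / ((m + 1) * (m + 2))"
    and "1 / m - 1 / (m + 1) = 1 / (m * (m + 1))"
    using assms(2) by (simp_all add: field_simps)
  moreover have "1 / ((m + 1) * (m + 2)) < 1 / (m * (m + 1))"
    using assms(2) by (intro frac_less2) (auto simp: algebra_simps intro!: add_pos_pos)
  ultimately have "inverse (m + 1) - inverse (m + 2) < inverse m - inverse (m + 1)"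
    by (simp add: inverse_eq_divide)
  define c where "c = 2 * \<delta>\<^sup>2 / 3"
  have f: "f_star y \<delta> = c * (y - inverse y)" for y unfolding c_def by (rule f_star_eq)
  have "f_star (m + 2) \<delta> - f_star (m + 1) \<delta> = c * (1 + (inverse (m + 1) - inverse (m + 2)))"
    unfolding f by (simp add: algebra_simps)
  also have "\<dots> < c * (1 + (inverse m - inverse (m + 1)))"
    using \<open>inverse (m + 1) - inverse (m + 2) < inverse m - inverse (m + 1)\<close> assms(1)
    unfolding c_def by (intro mult_strict_left_mono) auto
  also have "\<dots> = f_star (m + 1) \<delta> - f_star m \<delta>"
    unfolding f by (simp add: algebra_simps)
  finally show ?thesis .
qed

lemma beta_antimono:
  assumes "m \<le> n"
  shows "beta n \<le> beta m"
proof (cases "m = 0")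
  case False
  then have "2 * real m * (real m + 1) \<le> 2 * real n * (real n + 1)" "0 < 2 * real m * (real m + 1)"
    using assms by (auto intro!: mult_mono)
  then have "1 / (2 * real n * (real n + 1)) \<le> 1 / (2 * real m * (real m + 1))"
    by (intro frac_le) auto
  then show ?thesis using False assms by (simp add: beta_def)
qed (simp add: beta_def)

lemma N_part_ex1:
  assumes "0 < b"
  shows "\<exists>!N. N \<ge> 1 \<and> beta N \<le> ereal b \<and> ereal b < beta (N - 1)"
proof (rule ex_ex1I)
  obtain n :: nat where n: "1 / b < real n" using reals_Archimedean2 by blast
  moreover have "0 < 1 / b" using assms by simp
  ultimately have "0 < real n" by linarith
  then have "n \<ge> 1" by simp
  have "1 / (2 * real n * (real n + 1)) \<le> 1 / real n"
    using \<open>n \<ge> 1\<close> by (intro divide_left_mono) auto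
  also have "1 / real n < b" using n assms \<open>n \<ge> 1\<close> by (simp add: field_simps)
  finally have "beta n \<le> ereal b" using \<open>n \<ge> 1\<close> by (simp add: beta_def)
  define N where "N = (LEAST N. beta N \<le> ereal b)"
  have "beta N \<le> ereal b" unfolding N_def by (rule LeastI[of _ n]) fact
  moreover have "N \<ge> 1"
    using \<open>beta N \<le> ereal b\<close> by (cases N) (simp_all add: beta_def)
  moreover have "\<not> beta (N - 1) \<le> ereal b"
    unfolding N_def by (rule not_less_Least) (use \<open>N \<ge> 1\<close> N_def in auto)
  ultimately show "\<exists>N. N \<ge> 1 \<and> beta N \<le> ereal b \<and> ereal b < beta (N - 1)"
    by (auto simp: not_le)
next
  have False if "beta A \<le> ereal b" "ereal b < beta (B - 1)" "A < B" for A B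
    using beta_antimono[of A "B - 1"] that by fastforce
  then show "N1 = N2" if "N1 \<ge> 1 \<and> beta N1 \<le> ereal b \<and> ereal b < beta (N1 - 1)"
    and "N2 \<ge> 1 \<and> beta N2 \<le> ereal b \<and> ereal b < beta (N2 - 1)" for N1 N2
    using that by (metis linorder_neqE_nat)
qed

lemma N_part_antimono:
  assumes "0 < b1" "b1 \<le> b2"
  shows "N_part b2 \<le> N_part b1"
proof (rule ccontr)
  have spec: "beta (N_part b) \<le> ereal b \<and> ereal b < beta (N_part b - 1)" if "0 < b" for b
    using theI'[OF N_part_ex1[OF that]] unfolding N_part_def by blast
  assume "\<not> N_part b2 \<le> N_part b1"
  then have "beta (N_part b2 - 1) \<le> beta (N_part b1)" by (intro beta_antimono) simp
  then have "ereal b2 < ereal b1" using spec assms by (meson le_less_trans less_le_trans)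
  then show False using assms by simp
qed

theorem proposition3:
  fixes \<delta> :: real and k :: nat and h :: 'a and L :: "'a set" and S R :: 'a
  assumes "0 < \<delta>" and "\<delta> < 1" and "2 \<le> k"
    and "finite L" and "card L = k" and "h \<notin> L"
    and "(S = h \<and> R \<in> L) \<or> (R = h \<and> S \<in> L)"
  shows "b_eff \<delta> (star_edge h L) (insert h L) (star_conf h L) S R (insert h L - {S, R})
           = \<delta> + f_star (real k) \<delta>
    \<and> f_star (real k) \<delta> > 0
    \<and> (\<forall>x::real. x \<ge> 1 \<longrightarrow>
          (\<lambda>y. f_star y \<delta>) differentiable (at x) \<and> deriv (\<lambda>y. f_star y \<delta>) x > 0
          \<and> deriv (\<lambda>y. f_star y \<delta>) differentiable (at x)
          \<and> deriv (deriv (\<lambda>y. f_star y \<delta>)) x < 0)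
    \<and> (\<forall>k1 k2 :: nat. 2 \<le> k1 \<longrightarrow> k1 \<le> k2 \<longrightarrow>
          N_part (\<delta> + f_star (real k2) \<delta>) \<le> N_part (\<delta> + f_star (real k1) \<delta>))
    \<and> (\<forall>m :: nat. 2 \<le> m \<longrightarrow>
          f_star (real m + 2) \<delta> - f_star (real m + 1) \<delta> < f_star (real m + 1) \<delta> - f_star (real m) \<delta>)"
proof -
  have N_part_star: "N_part (\<delta> + f_star (real k2) \<delta>) \<le> N_part (\<delta> + f_star (real k1) \<delta>)"
    if "2 \<le> k1" "k1 \<le> k2" for k1 k2 :: nat
  proof (rule N_part_antimono)
    show "0 < \<delta> + f_star (real k1) \<delta>"
      using f_star_pos[OF assms(1), of "real k1"] that assms(1) by simp
    show "\<delta> + f_star (real k1) \<delta> \<le> \<delta> + f_star (real k2) \<delta>"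
      using f_star_mono[of "real k1" "real k2" \<delta>] that by simp
  qed
  have "f_star (real m + 2) \<delta> - f_star (real m + 1) \<delta> < f_star (real m + 1) \<delta> - f_star (real m) \<delta>"
    if "2 \<le> m" for m :: nat
    using f_star_increments_decrease[OF assms(1), of "real m"] that by simp
  moreover have "f_star (real k) \<delta> > 0"
    using f_star_pos[OF assms(1), of "real k"] assms(3) by simp
  ultimately show ?thesis
    using b_eff_star[OF assms(4,6,7)] assms(5) f_star_increasing_concave[OF assms(1)] N_part_star
    by auto
qed

end
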